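(* Let $\mathbf x:I\subset\mathbb R_*\to\mathbb R_*^3$ be a multiplicative naturally parametrized curve with multiplicative curvature $\kappa>0_*$ and torsion $\tau$ on $I$. Then $\mathbf x$ is a multiplicative slant helix if and only if the function $$\sigma(s)=\Big[\kappa^{2_*}(s)/_*\big(\kappa^{2_*}(s)+_*\tau^{2_*}(s)\big)^{\frac32_*}\Big]\cdot_*\big(\tau(s)/_*\kappa(s)\big)^*$$ is constant on $I$. (Explicitly, $\log\sigma=\dfrac{(\log\kappa)^2}{((\log\kappa)^2+(\log\tau)^2)^{3/2}}\log\big((\tau/_*\kappa)^*\big)$.)
   Context: Multiplicative arithmetic: $\mathbb R_*=(0,\infty)$ with $a+_*b=ab$, $a-_*b=a/b$, $a\cdot_*b=e^{\log a\log b}$, $a/_*b=e^{\log a/\log b}$ ($b\neq1$); $0_*=1$, $1_*=e$, $-_*a=1/a$; $a>0_*$ means $a>1$; powers $a^{r_*}=e^{(\log a)^r}$. On $\mathbb R_*^3$, with $\log\mathbf u=(\log u_i)_i$: $\mathbf u+_*\mathbf v=(u_iv_i)_i$, $k\cdot_*\mathbf u=(e^{\log k\log u_i})_i$, $\langle\mathbf u,\mathbf v\rangle_*=e^{\langle\log\mathbf u,\log\mathbf v\rangle}$, $\|\mathbf u\|_*=e^{\|\log\mathbf u\|}$, $\mathbf u\times_*\mathbf v=\exp(\log\mathbf u\times\log\mathbf v)$. Multiplicative derivative: $g^*(s)=e^{s g'(s)/g(s)}$, componentwise, iterated. $\mathbf x$ is naturally parametrized if $\|\mathbf x^*\|_*=1_*$.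 Multiplicative Frenet apparatus: $\mathbf t=\mathbf x^*$, $\kappa=\|\mathbf x^{**}\|_*$, $\mathbf n=\mathbf x^{**}/_*\kappa$, $\mathbf b=\mathbf t\times_*\mathbf n$, $\tau=\langle\mathbf n^*,\mathbf b\rangle_*$; Frenet formulas $\mathbf t^*=\kappa\cdot_*\mathbf n$, $\mathbf n^*=-_*\kappa\cdot_*\mathbf t+_*\tau\cdot_*\mathbf b$, $\mathbf b^*=-_*\tau\cdot_*\mathbf n$. A curve $\mathbf x$ with $\kappa\ne0_*$ is a multiplicative slant helix if there is a constant multiplicative unit vector $\mathbf v$ ($\|\mathbf v\|_*=1_*$) such that the multiplicative angle between $\mathbf n(s)$ and $\mathbf v$ is constant, i.e. $\langle\mathbf n(s),\mathbf v\rangle_*$ is constant on $I$. *)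

theory Defs
  imports "HOL-Analysis.Analysis"
begin

definition mzero :: real where "mzero = 1"
definition mone :: real where "mone = exp 1"
definition madd :: "real \<Rightarrow> real \<Rightarrow> real" where "madd a b = a * b"
definition mmul :: "real \<Rightarrow> real \<Rightarrow> real" where "mmul a b = exp (ln a * ln b)"
definition mdiv :: "real \<Rightarrow> real \<Rightarrow> real" where "mdiv a b = exp (ln a / ln b)"
definition mpow :: "real \<Rightarrow> nat \<Rightarrow> real" where "mpow a n = exp ((ln a) ^ n)"
definition mpowr :: "real \<Rightarrow> real \<Rightarrow> real" where "mpowr a r = exp ((ln a) powr r)"

definition vlog :: "real^3 \<Rightarrow> real^3" where "vlog u = (\<chi> i. ln (u $ i))"
definition vexp :: "real^3 \<Rightarrow> real^3" where "vexp v = (\<chi> i. exp (v $ i))"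
definition mvadd :: "real^3 \<Rightarrow> real^3 \<Rightarrow> real^3" where "mvadd u v = (\<chi> i. u $ i * v $ i)"
definition mscale :: "real \<Rightarrow> real^3 \<Rightarrow> real^3" where "mscale k u = (\<chi> i. mmul k (u $ i))"
definition mvdiv :: "real^3 \<Rightarrow> real \<Rightarrow> real^3" where "mvdiv u k = (\<chi> i. mdiv (u $ i) k)"
definition minner :: "real^3 \<Rightarrow> real^3 \<Rightarrow> real" where "minner u v = exp (inner (vlog u) (vlog v))"
definition mnorm :: "real^3 \<Rightarrow> real" where "mnorm u = exp (norm (vlog u))"
definition mcross :: "real^3 \<Rightarrow> real^3 \<Rightarrow> real^3" where "mcross u v = vexp (cross3 (vlog u) (vlog v))"

definition mderiv :: "(real \<Rightarrow> real) \<Rightarrow> real \<Rightarrow> real" where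
  "mderiv g s = exp (s * deriv g s / g s)"

definition mvderiv :: "(real \<Rightarrow> real^3) \<Rightarrow> real \<Rightarrow> real^3" where
  "mvderiv x s = (\<chi> i. mderiv (\<lambda>r. x r $ i) s)"

definition msmooth_on :: "real set \<Rightarrow> (real \<Rightarrow> real^3) \<Rightarrow> bool" where
  "msmooth_on I x \<longleftrightarrow> (\<forall>i n. \<forall>s\<in>I. ((mderiv ^^ n) (\<lambda>r. x r $ i)) differentiable (at s))"

definition mtangent :: "(real \<Rightarrow> real^3) \<Rightarrow> real \<Rightarrow> real^3" where
  "mtangent x s = mvderiv x s"
definition mcurvature :: "(real \<Rightarrow> real^3) \<Rightarrow> real \<Rightarrow> real" where
  "mcurvature x s = mnorm (mvderiv (mvderiv x) s)"
definition mnormal :: "(real \<Rightarrow> real^3) \<Rightarrow> real \<Rightarrow> real^3" where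
  "mnormal x s = mvdiv (mvderiv (mvderiv x) s) (mcurvature x s)"
definition mbinormal :: "(real \<Rightarrow> real^3) \<Rightarrow> real \<Rightarrow> real^3" where
  "mbinormal x s = mcross (mtangent x s) (mnormal x s)"
definition mtorsion :: "(real \<Rightarrow> real^3) \<Rightarrow> real \<Rightarrow> real" where
  "mtorsion x s = minner (mvderiv (mnormal x) s) (mbinormal x s)"

definition mnat_param :: "real set \<Rightarrow> (real \<Rightarrow> real^3) \<Rightarrow> bool" where
  "mnat_param I x \<longleftrightarrow> (\<forall>s\<in>I. mnorm (mvderiv x s) = mone)"

definition mslant_helix :: "real set \<Rightarrow> (real \<Rightarrow> real^3) \<Rightarrow> bool" where
  "mslant_helix I x \<longleftrightarrow> (\<forall>s\<in>I. mcurvature x s \<noteq> mzero) \<and>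
     (\<exists>v c. mnorm v = mone \<and> (\<forall>s\<in>I. minner (mnormal x s) v = c))"

definition msigma :: "(real \<Rightarrow> real^3) \<Rightarrow> real \<Rightarrow> real" where
  "msigma x s = mmul
     (mdiv (mpow (mcurvature x s) 2)
           (mpowr (madd (mpow (mcurvature x s) 2) (mpow (mtorsion x s) 2)) (3/2)))
     (mderiv (\<lambda>r. mdiv (mtorsion x r) (mcurvature x r)) s)"

end

theory Submission
  imports Defs
begin

(* Taking componentwise logarithms turns the multiplicative apparatus into the classical one:
   since log g*(s) = s (log g)'(s), the curve log o x carries an ordinary Frenet frame t, n, b,
   traversed with speed 1/s, whose curvature and torsion are log kappa and log tau.
   For such a frame let f = tau/kappa; the unit Darboux vector D = (f t + b) / sqrt (1 + f^2)
   satisfies D' = - sigma n'.  Hence if sigma = c is constant, c n + D is a constant vector at a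
   constant angle with n.  Conversely, if n . V = a for a unit vector V, then D . V is constant,
   and differentiating t . V = f (b . V) yields sigma (D . V) = a, where (D . V)^2 = 1 - a^2
   rules out D . V = 0. *)

section \<open>Vector calculus in three dimensions\<close>

lemma has_vector_derivative_vec_iff:
  fixes f :: "real \<Rightarrow> real^'n"
  shows "(f has_vector_derivative f') (at s within S) \<longleftrightarrow>
    (\<forall>i. ((\<lambda>r. f r $ i) has_real_derivative f' $ i) (at s within S))"
proof
  assume "(f has_vector_derivative f') (at s within S)"
  then show "\<forall>i. ((\<lambda>r. f r $ i) has_real_derivative f' $ i) (at s within S)"
    by (auto simp: has_real_derivative_iff_has_vector_derivative
        intro: bounded_linear.has_vector_derivative[OF bounded_linear_vec_nth])
next
  have expansion: "(\<Sum>i\<in>UNIV. y $ i *\<^sub>R axis i 1) = y" for y :: "real^'n"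
    using basis_expansion[of y] by (simp add: scalar_mult_eq_scaleR)
  assume "\<forall>i. ((\<lambda>r. f r $ i) has_real_derivative f' $ i) (at s within S)"
  then have "((\<lambda>r. \<Sum>i\<in>UNIV. f r $ i *\<^sub>R axis i (1::real)) has_vector_derivative
      (\<Sum>i\<in>UNIV. f' $ i *\<^sub>R axis i 1)) (at s within S)"
    by (auto intro!: derivative_eq_intros)
  then show "(f has_vector_derivative f') (at s within S)"
    by (simp add: expansion)
qed

lemma has_real_derivative_inner:
  fixes f g :: "real \<Rightarrow> 'a::real_inner"
  assumes "(f has_vector_derivative f') (at s within S)" "(g has_vector_derivative g') (at s within S)"
  shows "((\<lambda>r. inner (f r) (g r)) has_real_derivative inner (f s) g' + inner f' (g s)) (at s within S)"
  using bounded_bilinear.has_vector_derivative[OF bounded_bilinear_inner assms]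
  by (simp add: has_real_derivative_iff_has_vector_derivative)

lemma bounded_bilinear_cross3: "bounded_bilinear cross3"
  using bilinear_conv_bounded_bilinear bilinear_cross by blast

lemma has_vector_derivative_cross3:
  fixes f g :: "real \<Rightarrow> real^3"
  assumes "(f has_vector_derivative f') (at s within S)" "(g has_vector_derivative g') (at s within S)"
  shows "((\<lambda>r. cross3 (f r) (g r)) has_vector_derivative cross3 (f s) g' + cross3 f' (g s)) (at s within S)"
  using bounded_bilinear.has_vector_derivative[OF bounded_bilinear_cross3 assms] .

lemma differentiable_cross3:
  fixes f g :: "'a::real_normed_vector \<Rightarrow> real^3"
  assumes "f differentiable (at s within S)" "g differentiable (at s within S)"
  shows "(\<lambda>r. cross3 (f r) (g r)) differentiable (at s within S)"
  using assms bounded_bilinear.FDERIV[OF bounded_bilinear_cross3] unfolding differentiable_def by blast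

lemma has_real_derivative_zero_if_const_on_open:
  assumes "(g has_real_derivative d) (at s)" "open I" "s \<in> I" "\<And>r. r \<in> I \<Longrightarrow> g r = c"
  shows "d = 0"
proof -
  have "((\<lambda>r. c) has_real_derivative d) (at s)"
    using has_field_derivative_transform_within_open[OF assms(1-3)] assms(4) by auto
  then show ?thesis using DERIV_unique DERIV_const by blast
qed

lemma inner_const_on_open_imp_derivative:
  fixes u w :: "real \<Rightarrow> 'a::real_inner"
  assumes "open I" "s \<in> I" "\<And>r. r \<in> I \<Longrightarrow> inner (u r) (w r) = c"
    and "(u has_vector_derivative u') (at s)" "(w has_vector_derivative w') (at s)"
  shows "inner (u s) w' + inner u' (w s) = 0"
  using has_real_derivative_zero_if_const_on_open[OF has_real_derivative_inner[OF assms(4,5)] assms(1-3)] .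

lemma unit_imp_orthogonal_derivative:
  fixes u :: "real \<Rightarrow> 'a::real_inner"
  assumes "open I" "s \<in> I" "\<And>r. r \<in> I \<Longrightarrow> norm (u r) = 1"
    and "(u has_vector_derivative u') (at s)"
  shows "inner (u s) u' = 0"
proof -
  have "inner (u r) (u r) = 1" if "r \<in> I" for r
    using assms(3)[OF that] by (simp add: power2_norm_eq_inner[symmetric])
  then show ?thesis
    using inner_const_on_open_imp_derivative[OF assms(1,2) _ assms(4,4)] by (simp add: inner_commute)
qed

lemma cross3_cross3_right: "cross3 (a::real^3) (cross3 b c) = inner a c *\<^sub>R b - inner a b *\<^sub>R c"
  by (simp add: cross3_simps forall_3)

lemma cross3_cross3_left: "cross3 (cross3 (a::real^3) b) c = inner a c *\<^sub>R b - inner b c *\<^sub>R a"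
  by (simp add: cross3_simps forall_3)

lemma orthonormal_cross3_frame:
  fixes t n :: "real^3"
  assumes "norm t = 1" "norm n = 1" "inner t n = 0"
  shows "inner t t = 1" "inner n n = 1" "inner (cross3 t n) (cross3 t n) = 1"
    "inner n t = 0" "inner t (cross3 t n) = 0" "inner (cross3 t n) t = 0"
    "inner n (cross3 t n) = 0" "inner (cross3 t n) n = 0"
  using assms norm_cross_dot[of t n]
  by (auto simp: dot_cross_self inner_commute power2_norm_eq_inner[symmetric])

lemma orthonormal_cross3_expansion:
  fixes t n w :: "real^3"
  assumes "norm t = 1" "norm n = 1" "inner t n = 0"
  shows "w = inner w t *\<^sub>R t + inner w n *\<^sub>R n + inner w (cross3 t n) *\<^sub>R cross3 t n"
proof -
  define b where "b = cross3 t n"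
  define u where "u = w - inner w t *\<^sub>R t - inner w n *\<^sub>R n"
  have "inner t u = 0" "inner n u = 0"
    using assms by (auto simp: u_def inner_diff_right inner_commute power2_norm_eq_inner[symmetric])
  then have "cross3 b u = 0" unfolding b_def cross3_cross3_left by simp
  then have "inner b u *\<^sub>R b = inner b b *\<^sub>R u"
    using cross3_cross3_right[of b b u] by simp
  moreover have "inner b b = 1"
    using orthonormal_cross3_frame(3)[OF assms] by (simp add: b_def)
  moreover have "inner b u = inner w b"
    by (simp add: u_def b_def inner_diff_right dot_cross_self inner_commute)
  ultimately have "u = inner w b *\<^sub>R b" by simp
  then show ?thesis unfolding u_def b_def by (simp add: algebra_simps)
qed

lemma normal_derivative_in_frame:
  fixes t n :: "real \<Rightarrow> real^3"
  assumes "open I" "s \<in> I"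
    and "\<And>r. r \<in> I \<Longrightarrow> norm (t r) = 1" "\<And>r. r \<in> I \<Longrightarrow> norm (n r) = 1"
    and "\<And>r. r \<in> I \<Longrightarrow> inner (t r) (n r) = 0"
    and "(t has_vector_derivative t') (at s)" "(n has_vector_derivative n') (at s)"
  shows "n' = - inner t' (n s) *\<^sub>R t s + inner n' (cross3 (t s) (n s)) *\<^sub>R cross3 (t s) (n s)"
proof -
  have "inner n' (t s) = - inner t' (n s)"
    using inner_const_on_open_imp_derivative[OF assms(1,2,5,6,7)] by (simp add: inner_commute)
  moreover have "inner n' (n s) = 0"
    using unit_imp_orthogonal_derivative[OF assms(1,2,4,7)] by (simp add: inner_commute)
  ultimately show ?thesis
    using orthonormal_cross3_expansion[OF assms(3,4,5)[OF assms(2)], of n'] by simp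
qed

section \<open>Frenet frames traversed with variable speed\<close>

lemma powr_three_halves: "(a::real) \<ge> 0 \<Longrightarrow> a powr (3/2) = a * sqrt a"
  using powr_add[of a 1 "1/2"] by (simp add: powr_half_sqrt)

locale frenet_frame =
  fixes I :: "real set" and v \<kappa> \<tau> :: "real \<Rightarrow> real" and t n :: "real \<Rightarrow> real^3"
  assumes interval: "is_interval I" and open_domain: "open I"
    and speed_pos: "\<And>s. s \<in> I \<Longrightarrow> v s > 0"
    and curvature_pos: "\<And>s. s \<in> I \<Longrightarrow> \<kappa> s > 0"
    and norm_tangent: "\<And>s. s \<in> I \<Longrightarrow> norm (t s) = 1"
    and norm_normal: "\<And>s. s \<in> I \<Longrightarrow> norm (n s) = 1"
    and tangent_normal_orthogonal: "\<And>s. s \<in> I \<Longrightarrow> inner (t s) (n s) = 0"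
    and tangent_deriv: "\<And>s. s \<in> I \<Longrightarrow> (t has_vector_derivative (v s * \<kappa> s) *\<^sub>R n s) (at s)"
    and normal_deriv: "\<And>s. s \<in> I \<Longrightarrow>
      (n has_vector_derivative v s *\<^sub>R (\<tau> s *\<^sub>R cross3 (t s) (n s) - \<kappa> s *\<^sub>R t s)) (at s)"
    and ratio_differentiable: "\<And>s. s \<in> I \<Longrightarrow> (\<lambda>r. \<tau> r / \<kappa> r) differentiable (at s)"
begin

abbreviation b :: "real \<Rightarrow> real^3" where "b s \<equiv> cross3 (t s) (n s)"

lemma frame_inner:
  assumes "s \<in> I"
  shows "inner (t s) (t s) = 1" "inner (n s) (n s) = 1" "inner (b s) (b s) = 1"
    "inner (n s) (t s) = 0" "inner (t s) (b s) = 0" "inner (b s) (t s) = 0"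
    "inner (n s) (b s) = 0" "inner (b s) (n s) = 0" "inner (t s) (n s) = 0"
  using orthonormal_cross3_frame[OF norm_tangent norm_normal tangent_normal_orthogonal, OF assms assms assms]
    tangent_normal_orthogonal[OF assms] by auto

lemma binormal_deriv:
  assumes "s \<in> I"
  shows "(b has_vector_derivative (- v s * \<tau> s) *\<^sub>R n s) (at s)"
proof -
  have "(b has_vector_derivative
      cross3 (t s) (v s *\<^sub>R (\<tau> s *\<^sub>R b s - \<kappa> s *\<^sub>R t s)) + cross3 ((v s * \<kappa> s) *\<^sub>R n s) (n s)) (at s)"
    using has_vector_derivative_cross3[OF tangent_deriv normal_deriv, OF assms assms] .
  also have "cross3 (t s) (v s *\<^sub>R (\<tau> s *\<^sub>R b s - \<kappa> s *\<^sub>R t s)) + cross3 ((v s * \<kappa> s) *\<^sub>R n s) (n s)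
      = (- v s * \<tau> s) *\<^sub>R n s"
    using frame_inner[OF assms]
    by (simp add: cross_mult_left cross_mult_right Cross3.right_diff_distrib cross3_cross3_right)
  finally show ?thesis .
qed

definition ratio :: "real \<Rightarrow> real" where "ratio s = \<tau> s / \<kappa> s"

(* deriv ratio s / v s is the derivative of the ratio with respect to arc length *)
definition sigma :: "real \<Rightarrow> real" where
  "sigma s = \<kappa> s ^ 2 / (\<kappa> s ^ 2 + \<tau> s ^ 2) powr (3/2) * deriv ratio s / v s"

(* the unit Darboux vector (tau t + kappa b) / sqrt (kappa^2 + tau^2) *)
definition darboux :: "real \<Rightarrow> real^3" where
  "darboux s = (1 / sqrt (1 + ratio s ^ 2)) *\<^sub>R (ratio s *\<^sub>R t s + b s)"

lemma torsion_eq: "s \<in> I \<Longrightarrow> \<tau> s = ratio s * \<kappa> s"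
  using curvature_pos[of s] by (simp add: ratio_def)

lemma ratio_deriv: "s \<in> I \<Longrightarrow> (ratio has_real_derivative deriv ratio s) (at s)"
  using ratio_differentiable[of s] by (simp add: ratio_def[abs_def] DERIV_deriv_iff_real_differentiable)

lemma sigma_eq:
  assumes "s \<in> I"
  shows "sigma s = deriv ratio s / (v s * \<kappa> s * sqrt (1 + ratio s ^ 2) ^ 3)"
proof -
  define q where "q = sqrt (1 + ratio s ^ 2)"
  have k: "\<kappa> s > 0" and q: "q > 0" "q ^ 2 = 1 + ratio s ^ 2"
    using curvature_pos[OF assms] by (auto simp: q_def add_pos_nonneg)
  have "\<kappa> s ^ 2 + \<tau> s ^ 2 = (\<kappa> s * q) ^ 2"
    by (simp add: torsion_eq[OF assms] power_mult_distrib q(2) algebra_simps)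
  then have "(\<kappa> s ^ 2 + \<tau> s ^ 2) powr (3/2) = \<kappa> s ^ 3 * q ^ 3"
    using k q by (simp add: powr_three_halves power_mult_distrib power2_eq_square power3_eq_cube)
  then show ?thesis
    using k q unfolding sigma_def q_def[symmetric] by (simp add: power2_eq_square power3_eq_cube)
qed

lemma darboux_frame:
  assumes "s \<in> I"
  shows "inner (darboux s) (darboux s) = 1" "inner (n s) (darboux s) = 0"
proof -
  have "1 + ratio s ^ 2 > 0" by (simp add: add_pos_nonneg)
  then show "inner (darboux s) (darboux s) = 1"
    using frame_inner[OF assms]
    by (simp add: darboux_def inner_add_left inner_add_right power2_eq_square field_simps)
  show "inner (n s) (darboux s) = 0"
    using frame_inner[OF assms] by (simp add: darboux_def inner_add_right)
qed

lemma darboux_deriv: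
  assumes s: "s \<in> I"
  shows "(darboux has_vector_derivative
      (- sigma s) *\<^sub>R (v s *\<^sub>R (\<tau> s *\<^sub>R b s - \<kappa> s *\<^sub>R t s))) (at s)"
proof -
  define q where "q = sqrt (1 + ratio s ^ 2)"
  have q: "q > 0" "q ^ 2 = 1 + ratio s ^ 2" "1 + ratio s ^ 2 > 0"
    by (auto simp: q_def add_pos_nonneg)
  have "(darboux has_vector_derivative (deriv ratio s / q ^ 3) *\<^sub>R (t s - ratio s *\<^sub>R b s)) (at s)"
    unfolding darboux_def[abs_def] using q
    apply (auto intro!: derivative_eq_intros ratio_deriv tangent_deriv binormal_deriv s
        simp: q_def[symmetric] torsion_eq[OF s])
    apply (simp add: vec_eq_iff field_simps)
    using q(2) by algebra
  moreover have "(deriv ratio s / q ^ 3) *\<^sub>R (t s - ratio s *\<^sub>R b s)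
      = (- sigma s) *\<^sub>R (v s *\<^sub>R (\<tau> s *\<^sub>R b s - \<kappa> s *\<^sub>R t s))"
    using speed_pos[OF s] curvature_pos[OF s]
    by (simp add: sigma_eq[OF s] torsion_eq[OF s] q_def[symmetric] vec_eq_iff field_simps)
  ultimately show ?thesis by simp
qed

definition helix_axis :: "real \<Rightarrow> real \<Rightarrow> real^3" where
  "helix_axis c s = (1 / sqrt (1 + c ^ 2)) *\<^sub>R (c *\<^sub>R n s + darboux s)"

lemma helix_axis_deriv:
  assumes "s \<in> I" "sigma s = c"
  shows "(helix_axis c has_vector_derivative 0) (at s)"
proof -
  have "((\<lambda>r. c *\<^sub>R n r + darboux r) has_vector_derivative 0) (at s)"
    using has_vector_derivative_add[OF has_vector_derivative_scaleR[OF DERIV_const[of c] normal_deriv]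
        darboux_deriv, OF assms(1) assms(1)] assms(2) by simp
  then show ?thesis
    unfolding helix_axis_def[abs_def] using has_vector_derivative_scaleR[OF DERIV_const] by fastforce
qed

lemma helix_axis_frame:
  assumes "s \<in> I"
  shows "norm (helix_axis c s) = 1" "inner (n s) (helix_axis c s) = c / sqrt (1 + c ^ 2)"
proof -
  have c: "1 + c ^ 2 > 0" by (simp add: add_pos_nonneg)
  have "inner (helix_axis c s) (helix_axis c s) = 1"
    using frame_inner[OF assms] darboux_frame[OF assms] c
    by (simp add: helix_axis_def inner_add_left inner_add_right inner_commute power2_eq_square field_simps)
  then show "norm (helix_axis c s) = 1" by (simp add: norm_eq_sqrt_inner)
  show "inner (n s) (helix_axis c s) = c / sqrt (1 + c ^ 2)"
    using frame_inner[OF assms] darboux_frame[OF assms] by (simp add: helix_axis_def inner_add_right)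
qed

lemma slant_helix_if_sigma_const:
  assumes "\<forall>s\<in>I. sigma s = c"
  shows "\<exists>V a. norm V = 1 \<and> (\<forall>s\<in>I. inner (n s) V = a)"
proof (cases "I = {}")
  case True
  then show ?thesis by (intro exI[of _ "axis 1 1"]) auto
next
  case False
  then obtain s0 where s0: "s0 \<in> I" by auto
  obtain V where V: "\<And>s. s \<in> I \<Longrightarrow> helix_axis c s = V"
    using has_vector_derivative_zero_constant[OF is_interval_convex_1[THEN iffD1, OF interval]]
      helix_axis_deriv assms has_vector_derivative_at_within by metis
  show ?thesis
    using helix_axis_frame V s0 by metis
qed

context
  fixes V :: "real^3" and a :: real
  assumes norm_axis: "norm V = 1" and normal_angle: "\<And>s. s \<in> I \<Longrightarrow> inner (n s) V = a"
begin

lemma tangent_inner_axis: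
  assumes "s \<in> I"
  shows "inner (t s) V = ratio s * inner (b s) V"
proof -
  have "inner (n s) 0 + inner (v s *\<^sub>R (\<tau> s *\<^sub>R b s - \<kappa> s *\<^sub>R t s)) V = 0"
    using inner_const_on_open_imp_derivative[OF open_domain assms normal_angle
        normal_deriv[OF assms] has_vector_derivative_const] .
  then show ?thesis
    using speed_pos[OF assms] curvature_pos[OF assms]
    by (simp add: torsion_eq[OF assms] inner_diff_left)
qed

lemma darboux_inner_axis_deriv:
  assumes "s \<in> I"
  shows "((\<lambda>r. inner (darboux r) V) has_real_derivative 0) (at s)"
  using has_real_derivative_inner[OF darboux_deriv[OF assms] has_vector_derivative_const, of V]
    tangent_inner_axis[OF assms]
  by (simp add: torsion_eq[OF assms] inner_diff_left)

lemma darboux_inner_axis_eq: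
  assumes "s \<in> I"
  shows "inner (darboux s) V = sqrt (1 + ratio s ^ 2) * inner (b s) V"
proof -
  have "1 + ratio s ^ 2 > 0" by (simp add: add_pos_nonneg)
  then show ?thesis
    using tangent_inner_axis[OF assms]
    by (simp add: darboux_def inner_add_left field_simps power2_eq_square)
qed

lemma ratio_deriv_mult_binormal_inner_axis:
  assumes s: "s \<in> I"
  shows "deriv ratio s * inner (b s) V = v s * \<kappa> s * a * (1 + ratio s ^ 2)"
proof -
  have "((\<lambda>r. inner (t r) V) has_real_derivative v s * \<kappa> s * a) (at s)"
    using has_real_derivative_inner[OF tangent_deriv[OF s] has_vector_derivative_const, of V]
      normal_angle[OF s] by simp
  then have "((\<lambda>r. ratio r * inner (b r) V) has_real_derivative v s * \<kappa> s * a) (at s)"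
    by (rule has_field_derivative_transform_within_open[OF _ open_domain s])
      (simp add: tangent_inner_axis)
  moreover have "((\<lambda>r. ratio r * inner (b r) V) has_real_derivative
      ratio s * (- v s * \<tau> s * a) + deriv ratio s * inner (b s) V) (at s)"
    using DERIV_mult[OF ratio_deriv[OF s]
        has_real_derivative_inner[OF binormal_deriv[OF s] has_vector_derivative_const, of V]]
      normal_angle[OF s] by (simp add: algebra_simps)
  ultimately have "v s * \<kappa> s * a = ratio s * (- v s * \<tau> s * a) + deriv ratio s * inner (b s) V"
    by (rule DERIV_unique)
  then show ?thesis
    by (simp add: torsion_eq[OF s] power2_eq_square algebra_simps)
qed

lemma sigma_mult_darboux_inner_axis:
  assumes s: "s \<in> I"
  shows "sigma s * inner (darboux s) V = a"
proof -
  define q where "q = sqrt (1 + ratio s ^ 2)"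
  have q: "q > 0" "q ^ 2 = 1 + ratio s ^ 2" by (auto simp: q_def add_pos_nonneg)
  have "sigma s * inner (darboux s) V = deriv ratio s * inner (b s) V / (v s * \<kappa> s * q ^ 2)"
    using q speed_pos[OF s] curvature_pos[OF s]
    by (simp add: sigma_eq[OF s] darboux_inner_axis_eq[OF s] q_def[symmetric] power2_eq_square
        power3_eq_cube)
  also have "\<dots> = a"
    using q speed_pos[OF s] curvature_pos[OF s]
    by (simp add: ratio_deriv_mult_binormal_inner_axis[OF s] flip: q(2))
  finally show ?thesis .
qed

lemma darboux_inner_axis_square:
  assumes s: "s \<in> I"
  shows "inner (darboux s) V ^ 2 = 1 - a ^ 2"
proof -
  have "1 = inner V V"
    using norm_axis by (simp add: power2_norm_eq_inner[symmetric])
  also have "\<dots> = inner V (inner V (t s) *\<^sub>R t s + inner V (n s) *\<^sub>R n s + inner V (b s) *\<^sub>R b s)"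
    using orthonormal_cross3_expansion[OF norm_tangent norm_normal tangent_normal_orthogonal, OF s s s, of V]
    by simp
  also have "\<dots> = inner (t s) V ^ 2 + a ^ 2 + inner (b s) V ^ 2"
    using normal_angle[OF s] by (simp add: inner_add_right inner_commute power2_eq_square)
  finally show ?thesis
    using darboux_inner_axis_eq[OF s] tangent_inner_axis[OF s]
    by (simp add: power_mult_distrib add_nonneg_nonneg algebra_simps)
qed

lemma sigma_const_if_slant_helix: "\<exists>c. \<forall>s\<in>I. sigma s = c"
proof (cases "I = {}")
  case True
  then show ?thesis by auto
next
  case False
  then obtain s0 where s0: "s0 \<in> I" by auto
  obtain g where g: "\<And>s. s \<in> I \<Longrightarrow> inner (darboux s) V = g"
    using has_field_derivative_zero_constant[OF is_interval_convex_1[THEN iffD1, OF interval]]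
      darboux_inner_axis_deriv has_field_derivative_at_within by metis
  have "g \<noteq> 0"
  proof
    assume "g = 0"
    then have "a = 0" using sigma_mult_darboux_inner_axis[OF s0] g[OF s0] by simp
    then show False using darboux_inner_axis_square[OF s0] g[OF s0] \<open>g = 0\<close> by simp
  qed
  then have "\<forall>s\<in>I. sigma s = a / g"
    using sigma_mult_darboux_inner_axis g by (simp add: eq_divide_eq)
  then show ?thesis by blast
qed

end

theorem slant_helix_iff_sigma_const:
  "(\<exists>V a. norm V = 1 \<and> (\<forall>s\<in>I. inner (n s) V = a)) \<longleftrightarrow> (\<exists>c. \<forall>s\<in>I. sigma s = c)"
  using sigma_const_if_slant_helix slant_helix_if_sigma_const by blast

end

section \<open>Multiplicative curves in logarithmic coordinates\<close>

lemma has_real_derivative_ln_mderiv: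
  assumes "g differentiable (at s)" "g s > 0" "s > 0"
  shows "((\<lambda>r. ln (g r)) has_real_derivative ln (mderiv g s) / s) (at s)"
proof -
  have "((\<lambda>r. ln (g r)) has_real_derivative deriv g s / g s) (at s)"
    using assms(1,2) by (auto intro!: derivative_eq_intros simp: DERIV_deriv_iff_real_differentiable)
  then show ?thesis using assms(3) by (simp add: mderiv_def)
qed

lemma vlog_vexp: "vlog (vexp u) = u"
  by (simp add: vlog_def vexp_def)

lemma vlog_mvderiv_vexp:
  assumes "(u has_vector_derivative u') (at s)"
  shows "vlog (mvderiv (\<lambda>r. vexp (u r)) s) = s *\<^sub>R u'"
proof -
  have "deriv (\<lambda>r. exp (u r $ i)) s = exp (u s $ i) * u' $ i" for i
    using assms unfolding has_vector_derivative_vec_iff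
    by (intro DERIV_imp_deriv) (auto intro!: derivative_eq_intros)
  then show ?thesis
    by (simp add: vec_eq_iff vlog_def vexp_def mvderiv_def mderiv_def)
qed

locale mnat_curve =
  fixes I :: "real set" and x :: "real \<Rightarrow> real^3"
  assumes domain_interval: "is_interval I" and domain_open: "open I" and domain_pos: "I \<subseteq> {0<..}"
    and components_pos: "\<forall>s\<in>I. \<forall>i. x s $ i > 0"
    and smooth: "msmooth_on I x"
    and nat_param: "mnat_param I x"
    and mcurvature_pos: "\<forall>s\<in>I. mcurvature x s > mzero"
begin

definition log_mderiv :: "nat \<Rightarrow> real \<Rightarrow> real^3" where
  "log_mderiv k r = (\<chi> i. ln ((mderiv ^^ k) (\<lambda>q. x q $ i) r))"

definition kappa :: "real \<Rightarrow> real" where "kappa r = norm (log_mderiv 2 r)"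

definition normal :: "real \<Rightarrow> real^3" where "normal r = (1 / kappa r) *\<^sub>R log_mderiv 2 r"

definition tau :: "real \<Rightarrow> real" where
  "tau r = inner (vlog (mvderiv (mnormal x) r)) (cross3 (log_mderiv 1 r) (normal r))"

lemma log_mderiv_deriv:
  assumes s: "s \<in> I"
  shows "(log_mderiv k has_vector_derivative (1 / s) *\<^sub>R log_mderiv (Suc k) s) (at s)"
  unfolding has_vector_derivative_vec_iff
proof
  fix i
  define g where "g = (mderiv ^^ k) (\<lambda>q. x q $ i)"
  have "g differentiable (at s)" "s > 0"
    using smooth s domain_pos unfolding msmooth_on_def g_def by auto
  moreover have "g s > 0"
    using components_pos s by (cases k) (auto simp: g_def mderiv_def)
  ultimately have "((\<lambda>r. ln (g r)) has_real_derivative ln (mderiv g s) / s) (at s)"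
    by (blast intro: has_real_derivative_ln_mderiv)
  then show "((\<lambda>r. log_mderiv k r $ i) has_real_derivative ((1 / s) *\<^sub>R log_mderiv (Suc k) s) $ i) (at s)"
    by (simp add: log_mderiv_def g_def)
qed

lemma vlog_mvderiv: "vlog (mvderiv x r) = log_mderiv 1 r"
  by (simp add: vlog_def mvderiv_def log_mderiv_def)

lemma vlog_mvderiv_mvderiv: "vlog (mvderiv (mvderiv x) r) = log_mderiv 2 r"
  by (simp add: vlog_def mvderiv_def log_mderiv_def numeral_2_eq_2)

lemma mcurvature_eq: "mcurvature x r = exp (kappa r)"
  by (simp add: mcurvature_def mnorm_def vlog_mvderiv_mvderiv kappa_def)

lemma mnormal_eq: "mnormal x = (\<lambda>r. vexp (normal r))"
proof
  fix r
  have "mvderiv (mvderiv x) r $ i = exp (log_mderiv 2 r $ i)" for i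
    using vlog_mvderiv_mvderiv[of r] by (simp add: vlog_def vec_eq_iff mvderiv_def mderiv_def)
  then show "mnormal x r = vexp (normal r)"
    by (simp add: mnormal_def mvdiv_def mdiv_def mcurvature_eq normal_def vexp_def vec_eq_iff)
qed

lemma mtorsion_eq: "mtorsion x r = exp (tau r)"
  by (simp add: mtorsion_def minner_def mbinormal_def mcross_def mtangent_def mnormal_eq vlog_vexp
      vlog_mvderiv tau_def)

lemma kappa_pos: "s \<in> I \<Longrightarrow> kappa s > 0"
  using mcurvature_pos by (auto simp: mcurvature_eq mzero_def)

lemma norm_tangent: "s \<in> I \<Longrightarrow> norm (log_mderiv 1 s) = 1"
  using nat_param by (auto simp: mnat_param_def mone_def vlog_mvderiv mnorm_def)

lemma norm_normal: "s \<in> I \<Longrightarrow> norm (normal s) = 1"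
  using kappa_pos[of s] by (simp add: normal_def kappa_def)

lemma tangent_deriv:
  assumes "s \<in> I"
  shows "(log_mderiv 1 has_vector_derivative (1 / s * kappa s) *\<^sub>R normal s) (at s)"
  using log_mderiv_deriv[OF assms, of 1] kappa_pos[OF assms] by (simp add: normal_def numeral_2_eq_2)

lemma tangent_normal_orthogonal:
  assumes "s \<in> I"
  shows "inner (log_mderiv 1 s) (normal s) = 0"
  using unit_imp_orthogonal_derivative[OF domain_open assms norm_tangent tangent_deriv[OF assms]]
    domain_pos kappa_pos[OF assms] assms by auto

lemma kappa_differentiable:
  assumes "s \<in> I"
  shows "kappa differentiable (at s)"
proof -
  have "log_mderiv 2 differentiable (at s)"
    using log_mderiv_deriv[OF assms] differentiableI_vector by blast
  moreover have "norm differentiable (at (log_mderiv 2 s))"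
    using kappa_pos[OF assms] by (auto simp: kappa_def)
  ultimately have "(norm \<circ> log_mderiv 2) differentiable (at s)"
    by (rule differentiable_chain_at)
  then show ?thesis
    by (simp add: kappa_def[abs_def] o_def)
qed

lemma normal_deriv_explicit:
  assumes s: "s \<in> I"
  shows "(normal has_vector_derivative
      (1 / (s * kappa s)) *\<^sub>R log_mderiv 3 s - (deriv kappa s / kappa s ^ 2) *\<^sub>R log_mderiv 2 s) (at s)"
proof -
  have "(kappa has_real_derivative deriv kappa s) (at s)"
    using kappa_differentiable[OF s] by (simp add: DERIV_deriv_iff_real_differentiable)
  then show ?thesis
    unfolding normal_def[abs_def]
    using log_mderiv_deriv[OF s, of 2] kappa_pos[OF s]
    by (auto intro!: derivative_eq_intros simp: numeral_3_eq_3 numeral_2_eq_2 power2_eq_square)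
qed

lemma tau_eq:
  assumes "(normal has_vector_derivative N) (at s)"
  shows "tau s = s * inner N (cross3 (log_mderiv 1 s) (normal s))"
  using vlog_mvderiv_vexp[OF assms] by (simp add: tau_def mnormal_eq)

lemma tau_eq_triple_product:
  assumes s: "s \<in> I"
  shows "tau s = inner (log_mderiv 3 s) (cross3 (log_mderiv 1 s) (log_mderiv 2 s)) / kappa s ^ 2"
  using tau_eq[OF normal_deriv_explicit[OF s]] kappa_pos[OF s] domain_pos s
  by (auto simp: normal_def cross_mult_right inner_diff_left dot_cross_self power2_eq_square)

lemma normal_deriv:
  assumes s: "s \<in> I"
  shows "(normal has_vector_derivative
      (1 / s) *\<^sub>R (tau s *\<^sub>R cross3 (log_mderiv 1 s) (normal s) - kappa s *\<^sub>R log_mderiv 1 s)) (at s)"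
proof -
  define N where "N = (1 / (s * kappa s)) *\<^sub>R log_mderiv 3 s - (deriv kappa s / kappa s ^ 2) *\<^sub>R log_mderiv 2 s"
  have deriv: "(normal has_vector_derivative N) (at s)"
    unfolding N_def by (rule normal_deriv_explicit[OF s])
  have "s > 0" using domain_pos s by auto
  have "N = - inner ((1 / s * kappa s) *\<^sub>R normal s) (normal s) *\<^sub>R log_mderiv 1 s
      + inner N (cross3 (log_mderiv 1 s) (normal s)) *\<^sub>R cross3 (log_mderiv 1 s) (normal s)"
    by (rule normal_derivative_in_frame[OF domain_open s norm_tangent norm_normal
          tangent_normal_orthogonal tangent_deriv[OF s] deriv])
  also have "\<dots> = (1 / s) *\<^sub>R (tau s *\<^sub>R cross3 (log_mderiv 1 s) (normal s) - kappa s *\<^sub>R log_mderiv 1 s)"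
    using tau_eq[OF deriv] norm_normal[OF s] \<open>s > 0\<close>
    by (simp add: power2_norm_eq_inner[symmetric] algebra_simps)
  finally show ?thesis using deriv by simp
qed

lemma ratio_differentiable:
  assumes s: "s \<in> I"
  shows "(\<lambda>r. tau r / kappa r) differentiable (at s)"
proof -
  have log_mderiv_differentiable: "log_mderiv k differentiable (at s)" for k
    using log_mderiv_deriv[OF s] differentiableI_vector by blast
  have "(\<lambda>r. inner (log_mderiv 3 r) (cross3 (log_mderiv 1 r) (log_mderiv 2 r)) / kappa r ^ 3)
      differentiable (at s)"
    using log_mderiv_differentiable kappa_differentiable[OF s] kappa_pos[OF s]
    by (intro differentiable_divide differentiable_inner differentiable_cross3 differentiable_power) auto
  then obtain D where "((\<lambda>r. inner (log_mderiv 3 r) (cross3 (log_mderiv 1 r) (log_mderiv 2 r))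
      / kappa r ^ 3) has_derivative D) (at s)"
    unfolding differentiable_def by blast
  then have "((\<lambda>r. tau r / kappa r) has_derivative D) (at s)"
    by (rule has_derivative_transform_within_open[OF _ domain_open s])
      (simp add: tau_eq_triple_product kappa_pos power2_eq_square power3_eq_cube)
  then show ?thesis
    unfolding differentiable_def by blast
qed

sublocale log_frame: frenet_frame I "\<lambda>s. 1 / s" kappa tau "log_mderiv 1" normal
  by unfold_locales (use domain_interval domain_open domain_pos kappa_pos norm_tangent norm_normal
      tangent_normal_orthogonal tangent_deriv normal_deriv ratio_differentiable in auto)

lemma msigma_eq:
  assumes s: "s \<in> I"
  shows "msigma x s = exp (log_frame.sigma s)"
proof -
  have "deriv (\<lambda>r. exp (log_frame.ratio r)) s = exp (log_frame.ratio s) * deriv log_frame.ratio s"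
    by (rule DERIV_imp_deriv[OF DERIV_chain2[OF DERIV_exp log_frame.ratio_deriv[OF s]]])
  then show ?thesis
    using domain_pos s
    by (simp add: msigma_def log_frame.sigma_def mmul_def mdiv_def mpow_def mpowr_def madd_def
        mcurvature_eq mtorsion_eq mderiv_def exp_add[symmetric] log_frame.ratio_def[abs_def])
qed

lemma mslant_helix_iff: "mslant_helix I x \<longleftrightarrow> (\<exists>V a. norm V = 1 \<and> (\<forall>s\<in>I. inner (normal s) V = a))"
proof
  assume "mslant_helix I x"
  then obtain v c where v: "mnorm v = mone" and c: "\<forall>s\<in>I. minner (mnormal x s) v = c"
    unfolding mslant_helix_def by blast
  have "norm (vlog v) = 1"
    using v by (simp add: mnorm_def mone_def)
  moreover have "\<forall>s\<in>I. inner (normal s) (vlog v) = ln c"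
    using c by (auto simp: minner_def mnormal_eq vlog_vexp)
  ultimately show "\<exists>V a. norm V = 1 \<and> (\<forall>s\<in>I. inner (normal s) V = a)"
    by blast
next
  assume "\<exists>V a. norm V = 1 \<and> (\<forall>s\<in>I. inner (normal s) V = a)"
  then obtain V a where "norm V = 1" "\<forall>s\<in>I. inner (normal s) V = a"
    by blast
  then have "mnorm (vexp V) = mone" "\<forall>s\<in>I. minner (mnormal x s) (vexp V) = exp a"
    by (simp_all add: mnorm_def mone_def minner_def mnormal_eq vlog_vexp)
  moreover have "\<forall>s\<in>I. mcurvature x s \<noteq> mzero"
    using mcurvature_pos by force
  ultimately show "mslant_helix I x"
    unfolding mslant_helix_def by blast
qed

end

theorem theorem4p14:
  fixes x :: "real \<Rightarrow> real^3" and I :: "real set"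
  assumes "is_interval I" and "open I" and "I \<subseteq> {0<..}"
    and "\<forall>s\<in>I. \<forall>i. x s $ i > 0"
    and "msmooth_on I x"
    and "mnat_param I x"
    and "\<forall>s\<in>I. mcurvature x s > mzero"
  shows "mslant_helix I x \<longleftrightarrow> (\<exists>c. \<forall>s\<in>I. msigma x s = c)"
proof -
  interpret mnat_curve I x
    using assms by unfold_locales
  have "mslant_helix I x \<longleftrightarrow> (\<exists>V a. norm V = 1 \<and> (\<forall>s\<in>I. inner (normal s) V = a))"
    by (rule mslant_helix_iff)
  also have "\<dots> \<longleftrightarrow> (\<exists>c. \<forall>s\<in>I. log_frame.sigma s = c)"
    by (rule log_frame.slant_helix_iff_sigma_const)
  also have "\<dots> \<longleftrightarrow> (\<exists>c. \<forall>s\<in>I. msigma x s = c)"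
    using msigma_eq by (metis exp_ln exp_gt_zero ln_exp)
  finally show ?thesis .
qed

end
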